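(* Let $f\in\mathbb{R}[X_1,\dots,X_n]$ be a non-constant polynomial of degree $2d$ such that $|\alpha|<2d$ for each $\alpha\in\Delta$ and $f_{2d,i}>0$ for $i=1,\dots,n$. Let $$k\ \ge\ \max_{i=1,\dots,n} C\Big(t^{2d}-\frac{1}{2d}\sum_{\alpha\in\Delta}\alpha_i|f_{\alpha}|f_{2d,i}^{-\frac{|\alpha|}{2d}}t^{|\alpha|}\Big)$$ and $$r_L:=f_0-\frac{1}{2d}\sum_{\alpha\in\Delta}(2d-|\alpha|)|f_{\alpha}|k^{|\alpha|}(f_{2d}^{-\alpha})^{\frac{1}{2d}}.$$ Then $f_{gp}\ge r_L$.
   Context: $\mathbb{N}=\{0,1,2,\dots\}$. For $\alpha\in\mathbb{N}^n$ write $\underline{X}^\alpha=X_1^{\alpha_1}\cdots X_n^{\alpha_n}$, $|\alpha|=\sum_i\alpha_i$, and for $a\in\mathbb{R}^n$, $a^{\alpha}=\prod_i a_i^{\alpha_i}$ with $0^0=1$. For $f=\sum_\alpha f_\alpha\underline{X}^\alpha$ of degree $2d$: $f_0$ constant term, $f_{2d,i}$ coefficient of $X_i^{2d}$, $f_{2d}^{-\alpha}:=\prod_{i=1}^n f_{2d,i}^{-\alpha_i}$, $\Omega=\{\alpha: f_\alpha\ne0\}\setminus\{\underline{0},2d\epsilon_1,\dots,2d\epsilon_n\}$, $\Delta=\{\alpha\in\Omega:\ f_\alpha<0\text{ or }\alpha_i\text{ odd for some }i\}$, $\Delta^{<2d}=\{\alpha\in\Delta:|\alpha|<2d\}$. $f_{gp}$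 is the supremum (with $\sup\emptyset=-\infty$) of all $r\in\mathbb{R}$ for which there exist reals $a_{\alpha,i}\ge0$ ($\alpha\in\Delta$, $i=1,\dots,n$), $a_{\alpha,i}=0$ iff $\alpha_i=0$, with, for $a_\alpha=(a_{\alpha,1},\dots,a_{\alpha,n})$: (1) $(2d)^{2d}a_\alpha^\alpha=|f_\alpha|^{2d}\alpha^\alpha$ for $\alpha\in\Delta$, $|\alpha|=2d$; (2) $f_{2d,i}\ge\sum_{\alpha\in\Delta}a_{\alpha,i}$ for all $i$; (3) $f_0-r\ge\sum_{\alpha\in\Delta^{<2d}}(2d-|\alpha|)\big[\frac{|f_\alpha|^{2d}\alpha^\alpha}{(2d)^{2d}a_\alpha^\alpha}\big]^{1/(2d-|\alpha|)}$. For a univariate polynomial $p(t)=t^N-\sum_{j=0}^{N-1}c_jt^j$ with all $c_j\ge0$ and at least one $c_j\neq0$, $C(p)$ denotes the unique positive root of $p$; by convention $C(t^N):=0$. *)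

theory Defs
  imports Complex_Main "HOL-Computational_Algebra.Polynomial" "HOL-Library.Extended_Real"
begin

text \<open>A real polynomial in the variables X_0,...,X_{n-1} is represented by its coefficient
  function on exponent vectors alpha :: nat => nat (with alpha i = 0 for i >= n),
  having finite support.\<close>

definition is_mpoly :: "nat \<Rightarrow> ((nat \<Rightarrow> nat) \<Rightarrow> real) \<Rightarrow> bool" where
  "is_mpoly n f \<longleftrightarrow> finite {\<alpha>. f \<alpha> \<noteq> 0} \<and> (\<forall>\<alpha>. f \<alpha> \<noteq> 0 \<longrightarrow> (\<forall>i\<ge>n. \<alpha> i = 0))"

definition mdeg :: "nat \<Rightarrow> (nat \<Rightarrow> nat) \<Rightarrow> nat" where
  "mdeg n \<alpha> = (\<Sum>i<n. \<alpha> i)"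

definition total_degree :: "nat \<Rightarrow> ((nat \<Rightarrow> nat) \<Rightarrow> real) \<Rightarrow> nat" where
  "total_degree n f = Max (insert 0 (mdeg n ` {\<alpha>. f \<alpha> \<noteq> 0}))"

definition unit_exp :: "nat \<Rightarrow> nat \<Rightarrow> (nat \<Rightarrow> nat)" where
  "unit_exp i m = (\<lambda>j. if j = i then m else 0)"

definition const_coeff :: "((nat \<Rightarrow> nat) \<Rightarrow> real) \<Rightarrow> real" where
  "const_coeff f = f (\<lambda>_. 0)"

definition top_coeff :: "nat \<Rightarrow> ((nat \<Rightarrow> nat) \<Rightarrow> real) \<Rightarrow> nat \<Rightarrow> real" where
  "top_coeff d f i = f (unit_exp i (2*d))"

definition Omega :: "nat \<Rightarrow> nat \<Rightarrow> ((nat \<Rightarrow> nat) \<Rightarrow> real) \<Rightarrow> (nat \<Rightarrow> nat) set" where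
  "Omega n d f = {\<alpha>. f \<alpha> \<noteq> 0} - insert (\<lambda>_. 0) {unit_exp i (2*d) | i. i < n}"

definition Delta :: "nat \<Rightarrow> nat \<Rightarrow> ((nat \<Rightarrow> nat) \<Rightarrow> real) \<Rightarrow> (nat \<Rightarrow> nat) set" where
  "Delta n d f = {\<alpha> \<in> Omega n d f. f \<alpha> < 0 \<or> (\<exists>i<n. odd (\<alpha> i))}"

definition vpow :: "nat \<Rightarrow> (nat \<Rightarrow> real) \<Rightarrow> (nat \<Rightarrow> nat) \<Rightarrow> real" where
  "vpow n a \<alpha> = (\<Prod>i<n. a i ^ \<alpha> i)"

definition gp_set :: "nat \<Rightarrow> nat \<Rightarrow> ((nat \<Rightarrow> nat) \<Rightarrow> real) \<Rightarrow> real set" where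
  "gp_set n d f = {r. \<exists>a :: (nat \<Rightarrow> nat) \<Rightarrow> nat \<Rightarrow> real.
     (\<forall>\<alpha>\<in>Delta n d f. \<forall>i<n. a \<alpha> i \<ge> 0 \<and> (a \<alpha> i = 0 \<longleftrightarrow> \<alpha> i = 0)) \<and>
     (\<forall>\<alpha>\<in>Delta n d f. mdeg n \<alpha> = 2*d \<longrightarrow>
        (2*d) ^ (2*d) * vpow n (a \<alpha>) \<alpha> = \<bar>f \<alpha>\<bar> ^ (2*d) * vpow n (\<lambda>i. real (\<alpha> i)) \<alpha>) \<and>
     (\<forall>i<n. top_coeff d f i \<ge> (\<Sum>\<alpha>\<in>Delta n d f. a \<alpha> i)) \<and>
     const_coeff f - r \<ge> (\<Sum>\<alpha>\<in>{\<alpha>\<in>Delta n d f. mdeg n \<alpha> < 2*d}.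
        real (2*d - mdeg n \<alpha>) *
        ((\<bar>f \<alpha>\<bar> ^ (2*d) * vpow n (\<lambda>i. real (\<alpha> i)) \<alpha>) /
           ((2*d) ^ (2*d) * vpow n (a \<alpha>) \<alpha>)) powr (1 / real (2*d - mdeg n \<alpha>)))}"

text \<open>f_gp, as an extended real (sup of the empty set is -infinity).\<close>
definition f_gp :: "nat \<Rightarrow> nat \<Rightarrow> ((nat \<Rightarrow> nat) \<Rightarrow> real) \<Rightarrow> ereal" where
  "f_gp n d f = Sup (ereal ` gp_set n d f)"

text \<open>C(p): the unique positive root of p = t^N - sum c_j t^j (c_j >= 0, not all zero);
  by convention C(t^N) = 0.\<close>
definition Cbound :: "real poly \<Rightarrow> real" where
  "Cbound p = (if p = monom 1 (degree p) then 0 else (THE t. t > 0 \<and> poly p t = 0))"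

end

theory Submission
  imports Defs
begin

text \<open>Take the certificate
  a(\<alpha>,i) = \<alpha>_i |f_\<alpha>| / (2d) \<cdot> k^(|\<alpha>| - 2d) \<cdot> f_(2d,i)^(1 - |\<alpha>|/(2d)).
  Its sum over \<alpha> is f_(2d,i) k^(-2d) \<Sum>_\<alpha> c(\<alpha>,i) k^|\<alpha>|, where c(\<alpha>,i) are the coefficients of
  the i-th polynomial in the hypothesis on k. Since t \<mapsto> \<Sum>_\<alpha> c(\<alpha>,i) t^|\<alpha>| / t^(2d) is strictly
  decreasing, that sum is at most k^(2d) as soon as k lies beyond the unique positive root, so
  the top coefficients dominate. For this certificate every summand of the constant-term
  condition collapses to (2d - |\<alpha>|) |f_\<alpha>| k^|\<alpha>| (f_2d^-\<alpha>)^(1/(2d)) / (2d), hence r_L is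
  admissible.\<close>

lemma poly_monom_minus_sum_monom:
  fixes w :: "'b \<Rightarrow> real" and e :: "'b \<Rightarrow> nat"
  shows "poly (monom 1 D - (\<Sum>b\<in>B. monom (w b) (e b))) t = t ^ D - (\<Sum>b\<in>B. w b * t ^ e b)"
  by (simp add: poly_sum poly_monom)

text \<open>The ratio (\<Sum>_b w_b t^e_b) / t^D is strictly decreasing in t > 0.\<close>

lemma weighted_power_sum_less_power:
  fixes w :: "'b \<Rightarrow> real" and e :: "'b \<Rightarrow> nat"
  assumes fin: "finite B" and w: "\<forall>b\<in>B. 0 \<le> w b \<and> e b < D"
    and b0: "b0 \<in> B" "0 < w b0" and t: "0 < t" "t < u"
    and le: "(\<Sum>b\<in>B. w b * t ^ e b) \<le> t ^ D"
  shows "(\<Sum>b\<in>B. w b * u ^ e b) < u ^ D"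
proof -
  define l where "l = u / t"
  have l: "1 < l" and u: "u = l * t" unfolding l_def using t by simp_all
  have "(\<Sum>b\<in>B. w b * u ^ e b) = (\<Sum>b\<in>B. w b * l ^ e b * t ^ e b)"
    unfolding u by (simp add: power_mult_distrib mult.assoc)
  also have "\<dots> < (\<Sum>b\<in>B. w b * l ^ D * t ^ e b)"
  proof (rule sum_strict_mono_ex1[OF fin])
    show "\<forall>b\<in>B. w b * l ^ e b * t ^ e b \<le> w b * l ^ D * t ^ e b"
    proof
      fix b assume "b \<in> B"
      then have "l ^ e b \<le> l ^ D" using w l by (intro power_increasing) auto
      then show "w b * l ^ e b * t ^ e b \<le> w b * l ^ D * t ^ e b"
        using w \<open>b \<in> B\<close> t by (intro mult_right_mono mult_left_mono) auto
    qed
    have "l ^ e b0 < l ^ D" using w b0 l by (intro power_strict_increasing) auto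
    then have "w b0 * l ^ e b0 * t ^ e b0 < w b0 * l ^ D * t ^ e b0"
      using b0 t by (intro mult_strict_right_mono mult_strict_left_mono) auto
    then show "\<exists>b\<in>B. w b * l ^ e b * t ^ e b < w b * l ^ D * t ^ e b" using b0 by blast
  qed
  also have "\<dots> = l ^ D * (\<Sum>b\<in>B. w b * t ^ e b)"
    by (simp add: sum_distrib_left algebra_simps)
  also have "\<dots> \<le> l ^ D * t ^ D" using le l by (intro mult_left_mono) auto
  also have "\<dots> = u ^ D" unfolding u by (simp add: power_mult_distrib)
  finally show ?thesis .
qed

lemma ex_weighted_power_sum_eq_power:
  fixes w :: "'b \<Rightarrow> real" and e :: "'b \<Rightarrow> nat"
  assumes fin: "finite B" and w: "\<forall>b\<in>B. 0 \<le> w b \<and> e b < D"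
    and b0: "b0 \<in> B" "0 < w b0"
  shows "\<exists>r>0. (\<Sum>b\<in>B. w b * r ^ e b) = r ^ D"
proof -
  define S where "S t = (\<Sum>b\<in>B. w b * t ^ e b)" for t :: real
  define p :: "real poly" where "p = monom 1 D - (\<Sum>b\<in>B. monom (w b) (e b))"
  have p: "poly p t = t ^ D - S t" for t
    unfolding p_def S_def by (rule poly_monom_minus_sum_monom)
  define W where "W = (\<Sum>b\<in>B. w b)"
  have W: "w b0 \<le> W" unfolding W_def using fin b0 w by (intro member_le_sum) auto
  obtain D' where D: "D = Suc D'" using w b0 by (cases D) auto
  define t1 where "t1 = min 1 (w b0) / 2"
  define t2 where "t2 = W + 1"
  have t1: "0 < t1" "t1 < w b0" "t1 < 1" and t2: "1 \<le> t2"
    unfolding t1_def t2_def using b0 W by auto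
  have "t1 * t1 ^ D' < w b0 * t1 ^ D'" using t1 by simp
  also have "\<dots> \<le> w b0 * t1 ^ e b0"
    using w b0 t1 D by (intro mult_left_mono power_decreasing) auto
  also have "\<dots> \<le> S t1" unfolding S_def using fin b0 w t1
    by (intro member_le_sum[of b0 B "\<lambda>b. w b * t1 ^ e b"]) auto
  finally have neg: "poly p t1 < 0" using p[of t1] D by simp
  have "S t2 \<le> (\<Sum>b\<in>B. w b * t2 ^ D')" unfolding S_def
    using w t2 D by (intro sum_mono mult_left_mono power_increasing) auto
  also have "\<dots> = W * t2 ^ D'" unfolding W_def by (simp add: sum_distrib_right)
  also have "\<dots> < t2 * t2 ^ D'" using t2 unfolding t2_def by simp
  finally have pos: "0 < poly p t2" using p[of t2] D by simp
  have "t1 < t2" using t1 t2 by simp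
  then obtain r where "t1 < r" "poly p r = 0" using poly_IVT_pos neg pos by blast
  then show ?thesis using p[of r] t1 unfolding S_def by (intro exI[of _ r]) auto
qed

lemma Cbound_positive_root:
  fixes w :: "'b \<Rightarrow> real" and e :: "'b \<Rightarrow> nat"
  assumes fin: "finite B" and w: "\<forall>b\<in>B. 0 \<le> w b \<and> e b < D"
    and b0: "b0 \<in> B" "0 < w b0"
  defines "p \<equiv> monom 1 D - (\<Sum>b\<in>B. monom (w b) (e b))"
  shows "0 < Cbound p \<and> (\<Sum>b\<in>B. w b * Cbound p ^ e b) = Cbound p ^ D"
proof -
  obtain r where r: "0 < r" "(\<Sum>b\<in>B. w b * r ^ e b) = r ^ D"
    using ex_weighted_power_sum_eq_power[OF fin w b0] by blast
  have root_iff: "poly p t = 0 \<longleftrightarrow> (\<Sum>b\<in>B. w b * t ^ e b) = t ^ D" for t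
    unfolding p_def poly_monom_minus_sum_monom by linarith
  have unique: "s = r" if s: "0 < s" "(\<Sum>b\<in>B. w b * s ^ e b) = s ^ D" for s
  proof (cases s r rule: linorder_cases)
    case less
    with weighted_power_sum_less_power[OF fin w b0 s(1) less] s r show ?thesis by simp
  next
    case greater
    with weighted_power_sum_less_power[OF fin w b0 r(1) greater] s r show ?thesis by simp
  qed
  have "p \<noteq> monom 1 (degree p)"
  proof
    assume "p = monom 1 (degree p)"
    then have "poly p 1 = 1" by (metis poly_monom mult_1 power_one)
    moreover have "w b0 \<le> (\<Sum>b\<in>B. w b)" using fin b0 w by (intro member_le_sum) auto
    ultimately show False
      using b0 unfolding p_def poly_monom_minus_sum_monom by simp
  qed
  then have "Cbound p = (THE t. 0 < t \<and> poly p t = 0)" unfolding Cbound_def by simp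
  also have "\<dots> = r"
    by (rule the_equality) (use r unique root_iff in blast)+
  finally have "Cbound p = r" .
  then show ?thesis using r by simp
qed

lemma Cbound_le_imp_weighted_power_sum_le:
  fixes w :: "'b \<Rightarrow> real" and e :: "'b \<Rightarrow> nat"
  assumes fin: "finite B" and w: "\<forall>b\<in>B. 0 \<le> w b \<and> e b < D"
    and k: "Cbound (monom 1 D - (\<Sum>b\<in>B. monom (w b) (e b))) \<le> k"
  shows "(\<Sum>b\<in>B. w b * k ^ e b) \<le> k ^ D"
proof (cases "\<exists>b0\<in>B. 0 < w b0")
  case True
  then obtain b0 where b0: "b0 \<in> B" "0 < w b0" by blast
  let ?r = "Cbound (monom 1 D - (\<Sum>b\<in>B. monom (w b) (e b)))"
  have r: "0 < ?r" "(\<Sum>b\<in>B. w b * ?r ^ e b) = ?r ^ D"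
    using Cbound_positive_root[OF fin w b0] by auto
  show ?thesis
    using weighted_power_sum_less_power[OF fin w b0 r(1), of k] r(2) k
    by (cases "?r = k") auto
next
  case False
  then have "\<forall>b\<in>B. w b = 0" using w by force
  then have "Cbound (monom 1 D - (\<Sum>b\<in>B. monom (w b) (e b))) = 0"
    by (simp add: Cbound_def degree_monom_eq)
  then show ?thesis using k \<open>\<forall>b\<in>B. w b = 0\<close> by simp
qed

lemma Cbound_le_imp_pos:
  fixes w :: "'b \<Rightarrow> real" and e :: "'b \<Rightarrow> nat"
  assumes "finite B" "\<forall>b\<in>B. 0 \<le> w b \<and> e b < D" "b0 \<in> B" "0 < w b0"
    and "Cbound (monom 1 D - (\<Sum>b\<in>B. monom (w b) (e b))) \<le> k"
  shows "0 < k"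
  using Cbound_positive_root[OF assms(1-4)] assms(5) by linarith

lemma Delta_subset_support: "Delta n d f \<subseteq> {\<alpha>. f \<alpha> \<noteq> 0}"
  unfolding Delta_def Omega_def by auto

lemma finite_Delta: "is_mpoly n f \<Longrightarrow> finite (Delta n d f)"
  by (rule finite_subset[OF Delta_subset_support]) (simp add: is_mpoly_def)

lemma Delta_has_positive_exponent:
  assumes "is_mpoly n f" "\<alpha> \<in> Delta n d f"
  shows "\<exists>i<n. 0 < \<alpha> i"
proof (rule ccontr)
  assume "\<not> (\<exists>i<n. 0 < \<alpha> i)"
  moreover have "\<forall>i\<ge>n. \<alpha> i = 0"
    using assms Delta_subset_support unfolding is_mpoly_def by blast
  moreover have "\<alpha> \<noteq> (\<lambda>_. 0)"
    using assms(2) unfolding Delta_def Omega_def by blast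
  ultimately show False by (metis leI neq0_conv)
qed

lemma ratio_power_identity:
  fixes D m :: nat and c k Q :: real
  assumes "m < D" "0 < c" "0 < k" "0 < Q"
  shows "c ^ D / (real D ^ D * ((c / real D * (k ^ m / k ^ D)) ^ m * Q powr (1 - real m / real D)))
       = (c / real D * k ^ m * Q powr (- 1 / real D)) ^ (D - m)"
proof -
  obtain j where D: "D = m + j" using assms(1) less_imp_add_positive by blast
  define u where "u = c / real D"
  define K where "K = k ^ m / k ^ D"
  define q where "q = Q powr (- 1 / real D)"
  have Dpos: "0 < real D" using assms(1) by simp
  have q: "Q powr (1 - real m / real D) * q ^ j = 1"
    using Dpos assms(4) by (simp add: q_def D powr_realpow[symmetric] powr_powr powr_add[symmetric] field_simps)
  have K: "K ^ m * (k ^ m) ^ j = 1"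
    using assms(3) by (simp add: K_def D power_add power_divide power_mult[symmetric] mult.commute)
  have "c ^ D / (real D ^ D * ((c / real D * (k ^ m / k ^ D)) ^ m * Q powr (1 - real m / real D)))
      = u ^ D / (u ^ m * K ^ m * Q powr (1 - real m / real D))"
    by (simp add: u_def K_def power_divide power_mult_distrib)
  also have "\<dots> = u ^ j / (K ^ m * Q powr (1 - real m / real D))"
    using assms Dpos by (simp add: u_def D power_add)
  also have "\<dots> = u ^ j * (k ^ m) ^ j * q ^ j"
  proof -
    have "inverse (K ^ m * Q powr (1 - real m / real D)) = (k ^ m) ^ j * q ^ j"
      by (rule inverse_unique) (metis K q mult.assoc mult.left_commute mult_1_right)
    then show ?thesis by (simp add: divide_inverse mult.assoc)
  qed
  also have "\<dots> = (u * k ^ m * q) ^ (D - m)"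
    by (simp add: D power_mult_distrib)
  finally show ?thesis by (simp add: u_def q_def)
qed

text \<open>The coefficient of t^|\<alpha>| in the i-th polynomial whose positive root bounds k.\<close>

definition root_bound_coeff :: "nat \<Rightarrow> nat \<Rightarrow> ((nat \<Rightarrow> nat) \<Rightarrow> real) \<Rightarrow> nat \<Rightarrow> (nat \<Rightarrow> nat) \<Rightarrow> real" where
  "root_bound_coeff n d f i \<alpha> =
     1 / real (2 * d) * real (\<alpha> i) * \<bar>f \<alpha>\<bar> * top_coeff d f i powr (- real (mdeg n \<alpha>) / real (2 * d))"

lemma root_bound_coeff_nonneg: "0 \<le> root_bound_coeff n d f i \<alpha>"
  by (simp add: root_bound_coeff_def)

text \<open>The certificate a(\<alpha>,i) of the header, written so that its sum over \<alpha> factors through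
  the polynomial bounding k.\<close>

definition gp_witness :: "nat \<Rightarrow> nat \<Rightarrow> ((nat \<Rightarrow> nat) \<Rightarrow> real) \<Rightarrow> real \<Rightarrow> (nat \<Rightarrow> nat) \<Rightarrow> nat \<Rightarrow> real" where
  "gp_witness n d f k \<alpha> i = root_bound_coeff n d f i \<alpha> * k ^ mdeg n \<alpha> * (top_coeff d f i / k ^ (2 * d))"

lemma gp_witness_eq:
  assumes "0 < top_coeff d f i"
  shows "gp_witness n d f k \<alpha> i = real (\<alpha> i) * (\<bar>f \<alpha>\<bar> / real (2 * d) * (k ^ mdeg n \<alpha> / k ^ (2 * d)))
           * top_coeff d f i powr (1 - real (mdeg n \<alpha>) / real (2 * d))"
  using assms by (simp add: gp_witness_def root_bound_coeff_def powr_diff powr_minus_divide field_simps)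

lemma gp_witness_nonneg_iff:
  assumes "0 < k" "0 < top_coeff d f i" "f \<alpha> \<noteq> 0" "0 < d"
  shows "0 \<le> gp_witness n d f k \<alpha> i \<and> (gp_witness n d f k \<alpha> i = 0 \<longleftrightarrow> \<alpha> i = 0)"
  using assms by (simp add: gp_witness_eq)

lemma sum_gp_witness_le_top_coeff:
  assumes "finite A" "\<forall>\<alpha>\<in>A. mdeg n \<alpha> < 2 * d" "0 < top_coeff d f i"
    and "Cbound (monom 1 (2 * d) - (\<Sum>\<alpha>\<in>A. monom (root_bound_coeff n d f i \<alpha>) (mdeg n \<alpha>))) \<le> k"
  shows "(\<Sum>\<alpha>\<in>A. gp_witness n d f k \<alpha> i) \<le> top_coeff d f i"
proof -
  let ?F = "top_coeff d f i"
  have "0 \<le> k ^ (2 * d)" by (simp add: power_mult)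
  have "(\<Sum>\<alpha>\<in>A. root_bound_coeff n d f i \<alpha> * k ^ mdeg n \<alpha>) \<le> k ^ (2 * d)"
    using assms by (intro Cbound_le_imp_weighted_power_sum_le) (auto simp: root_bound_coeff_def)
  then have "(\<Sum>\<alpha>\<in>A. gp_witness n d f k \<alpha> i) \<le> k ^ (2 * d) * (?F / k ^ (2 * d))"
    unfolding gp_witness_def sum_distrib_right[symmetric]
    using assms(3) \<open>0 \<le> k ^ (2 * d)\<close> by (intro mult_right_mono) auto
  also have "\<dots> \<le> ?F" using assms(3) by (cases "k ^ (2 * d) = 0") auto
  finally show ?thesis .
qed

lemma vpow_scaled_powr:
  assumes "\<forall>i<n. 0 < F i"
  shows "vpow n (\<lambda>i. real (\<alpha> i) * K * F i powr s) \<alpha>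
       = vpow n (\<lambda>i. real (\<alpha> i)) \<alpha> * K ^ mdeg n \<alpha> * (\<Prod>i<n. F i powr real (\<alpha> i)) powr s"
proof -
  have "(F i powr s) ^ \<alpha> i = (F i powr real (\<alpha> i)) powr s" if "i < n" for i
  proof -
    have "F i \<noteq> 0" using assms that by auto
    then show ?thesis by (simp add: powr_power powr_powr ac_simps)
  qed
  then show ?thesis
    by (simp add: vpow_def mdeg_def power_mult_distrib prod.distrib power_sum prod_powr_distrib)
qed

lemma gp_witness_term_eq:
  assumes "0 < d" "\<forall>i<n. 0 < top_coeff d f i" "0 < k" "f \<alpha> \<noteq> 0" "mdeg n \<alpha> < 2 * d"
  shows "real (2 * d - mdeg n \<alpha>) *
           ((\<bar>f \<alpha>\<bar> ^ (2 * d) * vpow n (\<lambda>i. real (\<alpha> i)) \<alpha>) /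
             (real (2 * d) ^ (2 * d) * vpow n (gp_witness n d f k \<alpha>) \<alpha>)) powr (1 / real (2 * d - mdeg n \<alpha>))
       = real (2 * d - mdeg n \<alpha>) * \<bar>f \<alpha>\<bar> * k ^ mdeg n \<alpha> *
           (\<Prod>i<n. top_coeff d f i powr (- real (\<alpha> i))) powr (1 / real (2 * d)) / real (2 * d)"
proof -
  define m where "m = mdeg n \<alpha>"
  define D where "D = 2 * d"
  define Q where "Q = (\<Prod>i<n. top_coeff d f i powr real (\<alpha> i))"
  define A where "A = vpow n (\<lambda>i. real (\<alpha> i)) \<alpha>"
  define K where "K = \<bar>f \<alpha>\<bar> / real D * (k ^ m / k ^ D)"
  define s where "s = 1 - real m / real D"
  define X where "X = \<bar>f \<alpha>\<bar> / real D * k ^ m * Q powr (- 1 / real D)"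
  have "0 < Q" unfolding Q_def using assms(2) by (intro prod_pos) fastforce
  have "0 < A" unfolding A_def vpow_def by (intro prod_pos) (auto simp: zero_less_power_eq)
  have "0 < X" unfolding X_def using assms \<open>0 < Q\<close> by (simp add: D_def)
  have "vpow n (gp_witness n d f k \<alpha>) \<alpha> = vpow n (\<lambda>i. real (\<alpha> i) * K * top_coeff d f i powr s) \<alpha>"
    unfolding vpow_def using assms(2)
    by (intro prod.cong) (simp_all add: gp_witness_eq K_def s_def m_def D_def)
  also have "\<dots> = A * K ^ m * Q powr s"
    unfolding A_def Q_def m_def using assms(2) by (rule vpow_scaled_powr)
  finally have vpow_witness: "vpow n (gp_witness n d f k \<alpha>) \<alpha> = A * K ^ m * Q powr s" .
  have "(\<bar>f \<alpha>\<bar> ^ D * A) / (real D ^ D * vpow n (gp_witness n d f k \<alpha>) \<alpha>)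
      = \<bar>f \<alpha>\<bar> ^ D / (real D ^ D * (K ^ m * Q powr s))"
    unfolding vpow_witness using \<open>0 < A\<close> by simp
  also have "\<dots> = X ^ (D - m)"
    unfolding X_def K_def s_def using assms \<open>0 < Q\<close>
    by (intro ratio_power_identity) (auto simp: m_def D_def)
  finally have "(\<bar>f \<alpha>\<bar> ^ D * A) / (real D ^ D * vpow n (gp_witness n d f k \<alpha>) \<alpha>) = X ^ (D - m)" .
  moreover have "(X ^ (D - m)) powr (1 / real (D - m)) = X"
    using \<open>0 < X\<close> assms(5) by (simp add: powr_realpow[symmetric] powr_powr m_def D_def)
  moreover have "(\<Prod>i<n. top_coeff d f i powr (- real (\<alpha> i))) = Q powr (- 1)"
    unfolding Q_def prod_powr_distrib powr_powr by simp
  then have "(\<Prod>i<n. top_coeff d f i powr (- real (\<alpha> i))) powr (1 / real D) = Q powr (- 1 / real D)"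
    by (simp only: powr_powr) simp
  ultimately show ?thesis
    by (simp add: X_def A_def m_def D_def)
qed

lemma sum_gp_witness_terms:
  assumes "0 < d" "\<forall>i<n. 0 < top_coeff d f i" "\<forall>\<alpha>\<in>A. f \<alpha> \<noteq> 0 \<and> mdeg n \<alpha> < 2 * d"
    and "A \<noteq> {} \<Longrightarrow> 0 < k"
  shows "(\<Sum>\<alpha>\<in>{\<alpha>\<in>A. mdeg n \<alpha> < 2 * d}. real (2 * d - mdeg n \<alpha>) *
           ((\<bar>f \<alpha>\<bar> ^ (2 * d) * vpow n (\<lambda>i. real (\<alpha> i)) \<alpha>) /
             (real (2 * d) ^ (2 * d) * vpow n (gp_witness n d f k \<alpha>) \<alpha>)) powr (1 / real (2 * d - mdeg n \<alpha>)))
       = 1 / real (2 * d) * (\<Sum>\<alpha>\<in>A. real (2 * d - mdeg n \<alpha>) * \<bar>f \<alpha>\<bar> * k ^ mdeg n \<alpha> *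
           (\<Prod>i<n. top_coeff d f i powr (- real (\<alpha> i))) powr (1 / real (2 * d)))"
proof -
  have A: "{\<alpha>\<in>A. mdeg n \<alpha> < 2 * d} = A" using assms(3) by auto
  show ?thesis
    unfolding A sum_distrib_left
    by (intro sum.cong refl, subst gp_witness_term_eq[OF assms(1,2)]) (use assms(3,4) in auto)
qed

theorem corollary4p1:
  fixes n d :: nat and f :: "(nat \<Rightarrow> nat) \<Rightarrow> real" and k :: real
  assumes "is_mpoly n f"
    and "total_degree n f = 2 * d"
    and "d > 0"
    and "\<forall>\<alpha>\<in>Delta n d f. mdeg n \<alpha> < 2 * d"
    and "\<forall>i<n. top_coeff d f i > 0"
    and "\<forall>i<n. k \<ge> Cbound (monom 1 (2 * d) -
            (\<Sum>\<alpha>\<in>Delta n d f. monom (1 / real (2 * d) * real (\<alpha> i) * \<bar>f \<alpha>\<bar> *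
                 top_coeff d f i powr (- real (mdeg n \<alpha>) / real (2 * d))) (mdeg n \<alpha>)))"
  shows "f_gp n d f \<ge> ereal (const_coeff f - 1 / real (2 * d) *
            (\<Sum>\<alpha>\<in>Delta n d f. real (2 * d - mdeg n \<alpha>) * \<bar>f \<alpha>\<bar> * k ^ mdeg n \<alpha> *
               (\<Prod>i<n. top_coeff d f i powr (- real (\<alpha> i))) powr (1 / real (2 * d))))"
proof -
  let ?D = "Delta n d f"
  note k_bound = assms(6)[folded root_bound_coeff_def]
  have fin: "finite ?D" using assms(1) by (rule finite_Delta)
  have coeffs: "\<forall>\<alpha>\<in>?D. f \<alpha> \<noteq> 0 \<and> mdeg n \<alpha> < 2 * d"
    using assms(4) Delta_subset_support by blast
  have weights: "\<forall>\<alpha>\<in>?D. 0 \<le> root_bound_coeff n d f i \<alpha> \<and> mdeg n \<alpha> < 2 * d" for i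
    using assms(4) root_bound_coeff_nonneg by blast
  have k_pos: "0 < k" if nonempty: "?D \<noteq> {}"
  proof -
    obtain \<alpha> where \<alpha>: "\<alpha> \<in> ?D" using nonempty by blast
    obtain i where i: "i < n" "0 < \<alpha> i"
      using Delta_has_positive_exponent[OF assms(1) \<alpha>] by blast
    then have "0 < root_bound_coeff n d f i \<alpha>"
      using coeffs \<alpha> assms(3) assms(5)[rule_format, OF i(1)] by (simp add: root_bound_coeff_def)
    with i show ?thesis
      using Cbound_le_imp_pos[OF fin weights \<alpha>] k_bound by blast
  qed
  note terms = sum_gp_witness_terms[OF assms(3,5) coeffs k_pos]
  show ?thesis
    unfolding f_gp_def gp_set_def
    apply (intro Sup_upper imageI CollectI exI[of _ "gp_witness n d f k"] conjI)
    subgoal using gp_witness_nonneg_iff k_pos coeffs assms(3,5) by blast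
    subgoal using assms(4) by auto \<comment> \<open>no \<open>\<alpha> \<in> \<Delta>\<close> has degree \<open>2d\<close>\<close>
    subgoal using sum_gp_witness_le_top_coeff[OF fin assms(4)] assms(5) k_bound by blast
    subgoal using terms by simp
    done
qed

end
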